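(* If $G$ is a graph with girth $g(G)\ge 7$ and no isolated vertices, then $\theta(G^{[\natural 2]})=\chi_{i\mu_2}(G)=\gamma_t(G)$.
   Context: The girth is the length of a shortest cycle (infinite for forests). The exact distance-$2$ graph $G^{[\natural 2]}$ has vertex set $V(G)$, two vertices being adjacent iff their distance in $G$ equals $2$. $\theta(X)$ is the clique cover number: the minimum number of cliques partitioning $V(X)$. A set $M\subseteq V(G)$ is a $2$-distance mutual-visibility set if for every two vertices $u,v\in M$ there exists a shortest $u,v$-path of length at most $2$ none of whose internal vertices lies in $M$; it is an independent $2$-distance mutual-visibility (I2DMV) set if moreover it is independent. $\chi_{i\mu_2}(G)$ is the minimum cardinality of a partition of $V(G)$ into I2DMV sets. $\gamma_t(G)$ is the total domination number: minimum size of a set $D$ such that every vertex of $G$ has a neighbor in $D$. *)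

theory Defs
  imports Main "HOL-Library.Extended_Nat"
begin

definition graph :: "'a set \<Rightarrow> ('a \<Rightarrow> 'a \<Rightarrow> bool) \<Rightarrow> bool" where
  "graph V E \<longleftrightarrow> finite V \<and> (\<forall>u v. E u v \<longrightarrow> u \<in> V \<and> v \<in> V \<and> u \<noteq> v \<and> E v u)"

text \<open>Walks as nonempty vertex lists; a walk with list xs has length (length xs - 1).\<close>
definition walk :: "'a set \<Rightarrow> ('a \<Rightarrow> 'a \<Rightarrow> bool) \<Rightarrow> 'a list \<Rightarrow> bool" where
  "walk V E xs \<longleftrightarrow> xs \<noteq> [] \<and> set xs \<subseteq> V \<and> (\<forall>i. Suc i < length xs \<longrightarrow> E (xs ! i) (xs ! Suc i))"

definition walk_between :: "'a set \<Rightarrow> ('a \<Rightarrow> 'a \<Rightarrow> bool) \<Rightarrow> 'a \<Rightarrow> 'a \<Rightarrow> 'a list \<Rightarrow> bool" where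
  "walk_between V E u v xs \<longleftrightarrow> walk V E xs \<and> hd xs = u \<and> last xs = v"

definition has_dist :: "'a set \<Rightarrow> ('a \<Rightarrow> 'a \<Rightarrow> bool) \<Rightarrow> 'a \<Rightarrow> 'a \<Rightarrow> nat \<Rightarrow> bool" where
  "has_dist V E u v n \<longleftrightarrow>
     (\<exists>xs. walk_between V E u v xs \<and> length xs = Suc n) \<and>
     (\<forall>xs. walk_between V E u v xs \<longrightarrow> Suc n \<le> length xs)"

definition is_cycle :: "'a set \<Rightarrow> ('a \<Rightarrow> 'a \<Rightarrow> bool) \<Rightarrow> 'a list \<Rightarrow> bool" where
  "is_cycle V E xs \<longleftrightarrow> length xs \<ge> 3 \<and> distinct xs \<and> walk V E xs \<and> E (last xs) (hd xs)"

text \<open>Girth: length of a shortest cycle, infinite (\<infinity>) for forests.\<close>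
definition girth :: "'a set \<Rightarrow> ('a \<Rightarrow> 'a \<Rightarrow> bool) \<Rightarrow> enat" where
  "girth V E = (INF xs \<in> {xs. is_cycle V E xs}. enat (length xs))"

definition exact_dist2 :: "'a set \<Rightarrow> ('a \<Rightarrow> 'a \<Rightarrow> bool) \<Rightarrow> 'a \<Rightarrow> 'a \<Rightarrow> bool" where
  "exact_dist2 V E u v \<longleftrightarrow> has_dist V E u v 2"

definition is_partition :: "'a set \<Rightarrow> 'a set set \<Rightarrow> bool" where
  "is_partition V P \<longleftrightarrow> (\<forall>A\<in>P. A \<noteq> {} \<and> A \<subseteq> V) \<and> \<Union>P = V \<and> pairwise disjnt P"

definition clique :: "'a set \<Rightarrow> ('a \<Rightarrow> 'a \<Rightarrow> bool) \<Rightarrow> 'a set \<Rightarrow> bool" where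
  "clique V E A \<longleftrightarrow> A \<subseteq> V \<and> (\<forall>u\<in>A. \<forall>v\<in>A. u \<noteq> v \<longrightarrow> E u v)"

definition clique_cover_number :: "'a set \<Rightarrow> ('a \<Rightarrow> 'a \<Rightarrow> bool) \<Rightarrow> nat" where
  "clique_cover_number V E = (LEAST k. \<exists>P. is_partition V P \<and> card P = k \<and> (\<forall>A\<in>P. clique V E A))"

definition dmv2 :: "'a set \<Rightarrow> ('a \<Rightarrow> 'a \<Rightarrow> bool) \<Rightarrow> 'a set \<Rightarrow> bool" where
  "dmv2 V E M \<longleftrightarrow> M \<subseteq> V \<and> (\<forall>u\<in>M. \<forall>v\<in>M. u \<noteq> v \<longrightarrow>
     (\<exists>xs n. has_dist V E u v n \<and> n \<le> 2 \<and> walk_between V E u v xs \<and> length xs = Suc n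
             \<and> set (butlast (tl xs)) \<inter> M = {}))"

definition independent :: "'a set \<Rightarrow> ('a \<Rightarrow> 'a \<Rightarrow> bool) \<Rightarrow> 'a set \<Rightarrow> bool" where
  "independent V E M \<longleftrightarrow> M \<subseteq> V \<and> (\<forall>u\<in>M. \<forall>v\<in>M. \<not> E u v)"

definition i2dmv :: "'a set \<Rightarrow> ('a \<Rightarrow> 'a \<Rightarrow> bool) \<Rightarrow> 'a set \<Rightarrow> bool" where
  "i2dmv V E M \<longleftrightarrow> dmv2 V E M \<and> independent V E M"

definition chi_imu2 :: "'a set \<Rightarrow> ('a \<Rightarrow> 'a \<Rightarrow> bool) \<Rightarrow> nat" where
  "chi_imu2 V E = (LEAST k. \<exists>P. is_partition V P \<and> card P = k \<and> (\<forall>A\<in>P. i2dmv V E A))"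

definition total_dom_number :: "'a set \<Rightarrow> ('a \<Rightarrow> 'a \<Rightarrow> bool) \<Rightarrow> nat" where
  "total_dom_number V E = (LEAST k. \<exists>D. D \<subseteq> V \<and> card D = k \<and> (\<forall>v\<in>V. \<exists>d\<in>D. E v d))"

end

theory Submission
  imports Defs
begin

text \<open>
  In a triangle-free graph two distinct vertices with a common neighbour are at distance exactly 2.
  If moreover the girth is at least 7, the vertices of any clique of the exact distance-2 graph
  have a common neighbour: three of them pairwise joined by paths of length 2 through distinct
  middle vertices would close a 6-cycle, and through two equal middle vertices a 4-cycle.
  Hence the cliques of the exact distance-2 graph are precisely the subsets of open
  neighbourhoods, so clique covers and total dominating sets can be converted into each other
  without increasing the size, which gives \<open>\<theta> = \<gamma>\<^sub>t\<close>. Independent 2-distance mutual-visibility sets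
  are exactly these cliques in any graph, which gives \<open>\<theta> = \<chi>\<^sub>i\<^sub>\<mu>\<^sub>2\<close>.
\<close>

lemma graph_edgeD:
  assumes "graph V E" "E u v"
  shows "u \<in> V" "v \<in> V" "u \<noteq> v" "E v u"
  using assms unfolding graph_def by blast+

lemma walk_singleton: "walk V E [x] \<longleftrightarrow> x \<in> V"
  by (simp add: walk_def)

lemma walk_Cons_Cons:
  "walk V E (x # y # xs) \<longleftrightarrow> x \<in> V \<and> E x y \<and> walk V E (y # xs)"
  unfolding walk_def by (auto simp: nth_Cons split: nat.splits)

lemma girth_le_cycle_length:
  assumes "is_cycle V E xs"
  shows "girth V E \<le> enat (length xs)"
  unfolding girth_def by (rule INF_lower) (use assms in simp)

lemma girth_gt_3_no_triangle:
  assumes "graph V E" "girth V E > 3" "E a b" "E b c" "E c a"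
  shows False
proof -
  have "is_cycle V E [a, b, c]"
    using assms graph_edgeD(1,2)[OF assms(1)]
    by (auto simp: is_cycle_def walk_Cons_Cons walk_singleton dest: graph_edgeD(3)[OF assms(1)])
  from girth_le_cycle_length[OF this] assms(2) show False
    by (simp add: numeral_eq_enat eval_nat_numeral)
qed

lemma girth_gt_4_no_4_cycle:
  assumes "graph V E" "girth V E > 4" "E a b" "E b c" "E c d" "E d a" "a \<noteq> c" "b \<noteq> d"
  shows False
proof -
  have "is_cycle V E [a, b, c, d]"
    using assms graph_edgeD(1,2)[OF assms(1)]
    by (auto simp: is_cycle_def walk_Cons_Cons walk_singleton dest: graph_edgeD(3)[OF assms(1)])
  from girth_le_cycle_length[OF this] assms(2) show False
    by (simp add: numeral_eq_enat eval_nat_numeral)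
qed

lemma girth_gt_6_no_6_cycle:
  assumes "graph V E" "girth V E > 6"
    and "E a b" "E b c" "E c d" "E d e" "E e f" "E f a" "distinct [a, b, c, d, e, f]"
  shows False
proof -
  have "is_cycle V E [a, b, c, d, e, f]"
    using assms graph_edgeD(1,2)[OF assms(1)]
    by (auto simp: is_cycle_def walk_Cons_Cons walk_singleton dest: graph_edgeD(3)[OF assms(1)])
  from girth_le_cycle_length[OF this] assms(2) show False
    by (simp add: numeral_eq_enat eval_nat_numeral)
qed

lemma walk_between_length_1:
  assumes "walk_between V E u v xs" "length xs = 1"
  shows "u = v"
  using assms unfolding walk_between_def by (cases xs) auto

lemma walk_between_length_2:
  assumes "walk_between V E u v xs" "length xs = 2"
  shows "E u v"
  using assms unfolding walk_between_def
  by (auto simp: numeral_2_eq_2 length_Suc_conv walk_Cons_Cons)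

lemma walk_between_length_3:
  assumes "walk_between V E u v xs" "length xs = 3"
  obtains w where "xs = [u, w, v]" "E u w" "E w v"
  using assms unfolding walk_between_def
  by (auto simp: numeral_3_eq_3 length_Suc_conv walk_Cons_Cons)

lemma has_dist_le_2_non_adjacent:
  assumes "has_dist V E u v n" "n \<le> 2" "u \<noteq> v" "\<not> E u v"
  shows "n = 2"
proof -
  obtain xs where xs: "walk_between V E u v xs" "length xs = Suc n"
    using assms(1) unfolding has_dist_def by blast
  show ?thesis
    using assms(2-) walk_between_length_1[OF xs(1)] walk_between_length_2[OF xs(1)] xs(2)
    by (auto simp: le_Suc_eq numeral_2_eq_2)
qed

lemma exact_dist2_iff:
  assumes "graph V E"
  shows "exact_dist2 V E u v \<longleftrightarrow> u \<noteq> v \<and> \<not> E u v \<and> (\<exists>w. E u w \<and> E w v)"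
proof
  assume "exact_dist2 V E u v"
  then have dist: "has_dist V E u v 2" by (simp add: exact_dist2_def)
  then obtain xs where xs: "walk_between V E u v xs" "length xs = 3"
    unfolding has_dist_def by auto
  then obtain w where w: "E u w" "E w v" by (rule walk_between_length_3)
  have V: "u \<in> V" "v \<in> V" using graph_edgeD[OF assms] w by blast+
  have "\<not> walk_between V E u v ys" if "length ys < 3" for ys
    using dist that unfolding has_dist_def by fastforce
  from this[of "[u]"] this[of "[u, v]"] V w show "u \<noteq> v \<and> \<not> E u v \<and> (\<exists>w. E u w \<and> E w v)"
    by (auto simp: walk_between_def walk_Cons_Cons walk_singleton)
next
  assume "u \<noteq> v \<and> \<not> E u v \<and> (\<exists>w. E u w \<and> E w v)"
  then obtain w where uv: "u \<noteq> v" "\<not> E u v" and w: "E u w" "E w v" by blast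
  have "walk_between V E u v [u, w, v]"
    using w graph_edgeD(1,2)[OF assms] by (auto simp: walk_between_def walk_Cons_Cons walk_singleton)
  moreover have "3 \<le> length xs" if "walk_between V E u v xs" for xs
  proof (rule ccontr)
    assume "\<not> 3 \<le> length xs"
    moreover have "length xs \<noteq> 0" using that by (simp add: walk_between_def walk_def)
    ultimately have "length xs = 1 \<or> length xs = 2" by linarith
    then show False
      using walk_between_length_1[OF that] walk_between_length_2[OF that] uv by auto
  qed
  ultimately show "exact_dist2 V E u v"
    unfolding exact_dist2_def has_dist_def by (auto simp: numeral_3_eq_3)
qed

lemma i2dmv_iff_clique_exact_dist2:
  assumes "graph V E"
  shows "i2dmv V E A \<longleftrightarrow> clique V (exact_dist2 V E) A"
proof
  assume i2: "i2dmv V E A"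
  have "exact_dist2 V E u v" if uv: "u \<in> A" "v \<in> A" "u \<noteq> v" for u v
  proof -
    from i2 uv obtain n where "has_dist V E u v n" "n \<le> 2"
      unfolding i2dmv_def dmv2_def by blast
    moreover have "\<not> E u v" using i2 uv unfolding i2dmv_def independent_def by blast
    ultimately show ?thesis
      using has_dist_le_2_non_adjacent uv(3) unfolding exact_dist2_def by metis
  qed
  moreover have "A \<subseteq> V" using i2 by (simp add: i2dmv_def independent_def)
  ultimately show "clique V (exact_dist2 V E) A" by (simp add: clique_def)
next
  assume clq: "clique V (exact_dist2 V E) A"
  have indep: "\<not> E u v" if "u \<in> A" "v \<in> A" for u v
    using clq that graph_edgeD(3)[OF assms]
    unfolding clique_def exact_dist2_iff[OF assms] by blast
  have "\<exists>xs n. has_dist V E u v n \<and> n \<le> 2 \<and> walk_between V E u v xs \<and> length xs = Suc n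
      \<and> set (butlast (tl xs)) \<inter> A = {}" if uv: "u \<in> A" "v \<in> A" "u \<noteq> v" for u v
  proof -
    have dist: "has_dist V E u v 2" using clq uv unfolding clique_def exact_dist2_def by blast
    then obtain xs where xs: "walk_between V E u v xs" "length xs = 3"
      unfolding has_dist_def by auto
    then obtain w where w: "xs = [u, w, v]" "E u w" by (rule walk_between_length_3)
    have "w \<notin> A" using indep[OF uv(1)] w(2) by blast
    with dist xs w show ?thesis by (intro exI[of _ xs] exI[of _ 2]) simp
  qed
  moreover have "A \<subseteq> V" using clq by (simp add: clique_def)
  ultimately show "i2dmv V E A"
    using indep unfolding i2dmv_def dmv2_def independent_def by blast
qed

lemma chi_imu2_eq_clique_cover_number:
  assumes "graph V E"
  shows "chi_imu2 V E = clique_cover_number V (exact_dist2 V E)"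
  unfolding clique_cover_number_def chi_imu2_def by (simp add: i2dmv_iff_clique_exact_dist2[OF assms])

lemma common_neighbour_exact_dist2:
  assumes "graph V E" "girth V E > 3" "E u w" "E v w" "u \<noteq> v"
  shows "exact_dist2 V E u v"
proof -
  have "\<not> E u v"
    using girth_gt_3_no_triangle[OF assms(1,2) _ assms(4)] graph_edgeD(4)[OF assms(1,3)] by blast
  with assms(3-5) graph_edgeD(4)[OF assms(1,4)] show ?thesis
    unfolding exact_dist2_iff[OF assms(1)] by blast
qed

lemma exact_dist2_triple_common_neighbour:
  assumes g: "graph V E" and girth: "girth V E > 6"
    and ab: "exact_dist2 V E a b" and bc: "exact_dist2 V E b c" and ca: "exact_dist2 V E c a"
    and x: "E a x" "E x b"
  shows "E c x"
proof (rule ccontr)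
  assume cx: "\<not> E c x"
  have sym: "E p q \<Longrightarrow> E q p" and irrefl: "E p q \<Longrightarrow> p \<noteq> q" for p q
    using graph_edgeD[OF g] by blast+
  note d2 = exact_dist2_iff[OF g]
  have non_adj: "\<not> E a b" "\<not> E b c" "\<not> E c a" and "a \<noteq> b" "b \<noteq> c" "c \<noteq> a"
    using ab bc ca unfolding d2 by blast+
  obtain y where y: "E b y" "E y c" using bc d2 by blast
  obtain z where z: "E c z" "E z a" using ca d2 by blast
  have "x \<noteq> y" "x \<noteq> z" "x \<noteq> c" "y \<noteq> a" "z \<noteq> b"
    using x y z cx non_adj sym by blast+
  show False
  proof (cases "y = z")
    case True
    have "girth V E > 4" by (rule less_trans[OF _ girth]) (simp add: numeral_eq_enat)
    with True z(2) \<open>a \<noteq> b\<close> \<open>x \<noteq> y\<close> show False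
      using girth_gt_4_no_4_cycle[OF g _ x y(1)] by blast
  next
    case False
    have "distinct [a, x, b, y, c, z]"
      using False \<open>a \<noteq> b\<close> \<open>b \<noteq> c\<close> \<open>c \<noteq> a\<close> \<open>x \<noteq> y\<close> \<open>x \<noteq> z\<close> \<open>x \<noteq> c\<close> \<open>y \<noteq> a\<close> \<open>z \<noteq> b\<close>
        irrefl[OF x(1)] irrefl[OF x(2)] irrefl[OF y(1)] irrefl[OF y(2)] irrefl[OF z(1)] irrefl[OF z(2)]
      by auto
    then show False using girth_gt_6_no_6_cycle[OF g girth x y z] by blast
  qed
qed

lemma clique_exact_dist2_common_neighbour:
  assumes g: "graph V E" and girth: "girth V E > 6" and no_isolated: "\<forall>v\<in>V. \<exists>u. E v u"
    and clq: "clique V (exact_dist2 V E) A" and "A \<noteq> {}"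
  obtains x where "x \<in> V" "\<forall>a\<in>A. E a x"
proof (cases "\<exists>a b. a \<in> A \<and> b \<in> A \<and> a \<noteq> b")
  case False
  with \<open>A \<noteq> {}\<close> obtain a where A: "A = {a}" by blast
  with clq no_isolated obtain x where "E a x" by (auto simp: clique_def)
  with A graph_edgeD(2)[OF g] show thesis by (intro that) auto
next
  case True
  then obtain a b where ab: "a \<in> A" "b \<in> A" "a \<noteq> b" by blast
  have d2: "exact_dist2 V E p q" if "p \<in> A" "q \<in> A" "p \<noteq> q" for p q
    using clq that by (simp add: clique_def)
  obtain x where x: "E a x" "E x b" using d2[OF ab] exact_dist2_iff[OF g] by blast
  have "E c x" if "c \<in> A" for c
  proof -
    consider "c = a" | "c = b" | "c \<noteq> a" "c \<noteq> b" by blast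
    then show ?thesis
    proof cases
      case 1
      with x show ?thesis by simp
    next
      case 2
      with graph_edgeD(4)[OF g x(2)] show ?thesis by simp
    next
      case 3
      with ab that show ?thesis
        using exact_dist2_triple_common_neighbour[OF g girth d2[OF ab] d2[OF ab(2) that] d2[OF that ab(1)] x]
        by auto
    qed
  qed
  with graph_edgeD(2)[OF g x(1)] show thesis by (meson that)
qed

lemma clique_cover_number_le:
  assumes "is_partition V P" "\<forall>A\<in>P. clique V E A"
  shows "clique_cover_number V E \<le> card P"
  unfolding clique_cover_number_def by (rule Least_le) (use assms in blast)

lemma obtain_minimum_clique_partition:
  obtains P where "is_partition V P" "card P = clique_cover_number V E" "\<forall>A\<in>P. clique V E A"
proof -
  let ?singletons = "(\<lambda>v. {v}) ` V"
  have "is_partition V ?singletons"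
    by (auto simp: is_partition_def pairwise_def disjnt_def)
  moreover have "\<forall>A\<in>?singletons. clique V E A" by (auto simp: clique_def)
  ultimately have "\<exists>P. is_partition V P \<and> card P = card ?singletons \<and> (\<forall>A\<in>P. clique V E A)"
    by blast
  then have "\<exists>P. is_partition V P \<and> card P = clique_cover_number V E \<and> (\<forall>A\<in>P. clique V E A)"
    unfolding clique_cover_number_def by (rule LeastI)
  with that show thesis by blast
qed

lemma total_dom_number_le:
  assumes "D \<subseteq> V" "\<forall>v\<in>V. \<exists>d\<in>D. E v d"
  shows "total_dom_number V E \<le> card D"
  unfolding total_dom_number_def by (rule Least_le) (use assms in blast)

lemma obtain_minimum_total_dominating_set:
  assumes "graph V E" "\<forall>v\<in>V. \<exists>u. E v u"
  obtains D where "D \<subseteq> V" "card D = total_dom_number V E" "\<forall>v\<in>V. \<exists>d\<in>D. E v d"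
proof -
  have "\<forall>v\<in>V. \<exists>d\<in>V. E v d" using assms graph_edgeD(2) by metis
  then have "\<exists>D. D \<subseteq> V \<and> card D = card V \<and> (\<forall>v\<in>V. \<exists>d\<in>D. E v d)" by blast
  then have "\<exists>D. D \<subseteq> V \<and> card D = total_dom_number V E \<and> (\<forall>v\<in>V. \<exists>d\<in>D. E v d)"
    unfolding total_dom_number_def by (rule LeastI)
  with that show thesis by blast
qed

lemma is_partition_fibres: "is_partition V ((\<lambda>y. {v\<in>V. f v = y}) ` f ` V)"
  by (auto simp: is_partition_def pairwise_def disjnt_def)

lemma clique_cover_number_exact_dist2_le_total_dom_number:
  assumes g: "graph V E" and girth: "girth V E > 3" and no_isolated: "\<forall>v\<in>V. \<exists>u. E v u"
  shows "clique_cover_number V (exact_dist2 V E) \<le> total_dom_number V E"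
proof -
  obtain D where D: "D \<subseteq> V" "card D = total_dom_number V E" "\<forall>v\<in>V. \<exists>d\<in>D. E v d"
    using obtain_minimum_total_dominating_set[OF g no_isolated] .
  from D(3) obtain f where f: "\<And>v. v \<in> V \<Longrightarrow> f v \<in> D \<and> E v (f v)" by metis
  define P where "P = (\<lambda>d. {v\<in>V. f v = d}) ` f ` V"
  have "exact_dist2 V E u v" if "u \<in> V" "v \<in> V" "f u = f v" "u \<noteq> v" for u v
    using common_neighbour_exact_dist2[OF g girth, of u "f u" v] f[OF that(1)] f[OF that(2)] that(3-4)
    by simp
  then have "clique V (exact_dist2 V E) {v\<in>V. f v = d}" for d
    unfolding clique_def by blast
  then have "\<forall>A\<in>P. clique V (exact_dist2 V E) A"
    unfolding P_def by blast
  then have "clique_cover_number V (exact_dist2 V E) \<le> card P"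
    unfolding P_def by (intro clique_cover_number_le is_partition_fibres)
  also have "\<dots> \<le> card (f ` V)"
    unfolding P_def using g by (intro card_image_le) (simp add: graph_def)
  also have "\<dots> \<le> card D"
    using D(1) f g by (intro card_mono) (auto simp: graph_def intro: finite_subset)
  finally show ?thesis using D(2) by simp
qed

lemma total_dom_number_le_clique_cover_number_exact_dist2:
  assumes g: "graph V E" and girth: "girth V E > 6" and no_isolated: "\<forall>v\<in>V. \<exists>u. E v u"
  shows "total_dom_number V E \<le> clique_cover_number V (exact_dist2 V E)"
proof -
  obtain Q where Q: "is_partition V Q" "card Q = clique_cover_number V (exact_dist2 V E)"
    and clq: "\<forall>A\<in>Q. clique V (exact_dist2 V E) A"
    by (rule obtain_minimum_clique_partition)
  have "\<exists>x. x \<in> V \<and> (\<forall>a\<in>A. E a x)" if "A \<in> Q" for A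
    using clique_exact_dist2_common_neighbour[OF g girth no_isolated] clq Q(1) that
    unfolding is_partition_def by metis
  then obtain h where h: "\<And>A. A \<in> Q \<Longrightarrow> h A \<in> V \<and> (\<forall>a\<in>A. E a (h A))" by metis
  have "total_dom_number V E \<le> card (h ` Q)"
    using h Q(1) by (intro total_dom_number_le) (auto simp: is_partition_def)
  also have "\<dots> \<le> card Q"
    using Q(1) g by (intro card_image_le) (auto simp: is_partition_def graph_def finite_UnionD)
  finally show ?thesis using Q(2) by simp
qed

theorem theorem3p6:
  fixes V :: "'a set" and E :: "'a \<Rightarrow> 'a \<Rightarrow> bool"
  assumes "graph V E"
    and "girth V E \<ge> 7"
    and "\<forall>v\<in>V. \<exists>u. E v u"
  shows "clique_cover_number V (exact_dist2 V E) = chi_imu2 V E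
       \<and> chi_imu2 V E = total_dom_number V E"
proof -
  have girth6: "girth V E > 6" and girth3: "girth V E > 3"
    using assms(2) by (auto intro: order.strict_trans2[rotated] simp: numeral_eq_enat)
  show ?thesis
    using chi_imu2_eq_clique_cover_number[OF assms(1)]
      clique_cover_number_exact_dist2_le_total_dom_number[OF assms(1) girth3 assms(3)]
      total_dom_number_le_clique_cover_number_exact_dist2[OF assms(1) girth6 assms(3)]
    by simp
qed

end
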